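(* Let $\xi=(\tau_L,\delta_L,\tau_R,\delta_R)\in\Phi_{\rm BYG}$. Then $m_{\rm crit}>2\delta_R$.
   Context: Let $\Phi=\{\xi\in\mathbb{R}^4: \tau_L>\delta_L+1,\ \delta_L>0,\ \tau_R<-(\delta_R+1),\ \delta_R>0\}$. For $\xi\in\Phi$, the matrix $\begin{bmatrix}\tau_L&1\\-\delta_L&0\end{bmatrix}$ has real eigenvalues $0<\lambda_L^s<1<\lambda_L^u$. Let $\phi(\xi)=\delta_R-\left(\tau_R+\delta_L+\delta_R-(1+\tau_R)\lambda_L^u\right)\lambda_L^u$ and $\Phi_{\rm BYG}=\{\xi\in\Phi:\phi(\xi)>0\}$. Let $m_{\rm crit}=\lambda_L^s+\frac{2\tau_L}{(\lambda_L^u)^2-1}$. *)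

theory Defs
  imports Complex_Main
begin

text \<open>Eigenvalues of the matrix [[tauL, 1], [-deltaL, 0]], i.e. roots of
  lambda^2 - tauL*lambda + deltaL = 0 (real when tauL > deltaL + 1, deltaL > 0).\<close>
definition lamLu :: "real \<Rightarrow> real \<Rightarrow> real" where
  "lamLu tL dL = (tL + sqrt (tL^2 - 4*dL)) / 2"

definition lamLs :: "real \<Rightarrow> real \<Rightarrow> real" where
  "lamLs tL dL = (tL - sqrt (tL^2 - 4*dL)) / 2"

definition Phi :: "(real \<times> real \<times> real \<times> real) set" where
  "Phi = {(tL, dL, tR, dR). tL > dL + 1 \<and> dL > 0 \<and> tR < -(dR + 1) \<and> dR > 0}"

definition phi :: "real \<times> real \<times> real \<times> real \<Rightarrow> real" where
  "phi xi = (case xi of (tL, dL, tR, dR) \<Rightarrow>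
     dR - (tR + dL + dR - (1 + tR) * lamLu tL dL) * lamLu tL dL)"

definition Phi_BYG :: "(real \<times> real \<times> real \<times> real) set" where
  "Phi_BYG = {xi \<in> Phi. phi xi > 0}"

definition m_crit :: "real \<times> real \<times> real \<times> real \<Rightarrow> real" where
  "m_crit xi = (case xi of (tL, dL, tR, dR) \<Rightarrow>
     lamLs tL dL + 2 * tL / ((lamLu tL dL)^2 - 1))"

end

theory Submission
  imports Defs
begin

text \<open>Write \<open>u\<close> and \<open>s\<close> for the unstable and stable eigenvalue, so \<open>u + s = \<tau>\<^sub>L\<close> and
  \<open>u s = \<delta>\<^sub>L\<close>. Expanding \<open>\<phi>\<close> and using \<open>\<tau>\<^sub>R < -(\<delta>\<^sub>R + 1)\<close> together with \<open>u > 1\<close> turns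
  \<open>\<phi> > 0\<close> into \<open>\<delta>\<^sub>R (u\<^sup>2 - 1) < u (1 - \<delta>\<^sub>L)\<close>. On the other side,
  \<open>m\<^sub>c\<^sub>r\<^sub>i\<^sub>t (u\<^sup>2 - 1) - 2 u (1 - \<delta>\<^sub>L) = s (3 u\<^sup>2 + 1) > 0\<close>.\<close>

lemma discriminant_pos_if_trace_gt:
  fixes tL dL :: real
  assumes "dL + 1 < tL"
  shows "4 * dL < tL\<^sup>2"
proof (cases "0 \<le> dL + 1")
  case True
  then have "(dL + 1)\<^sup>2 < tL\<^sup>2"
    using assms by (intro power_strict_mono) auto
  moreover have "4 * dL \<le> (dL + 1)\<^sup>2"
    using zero_le_power2[of "dL - 1"] by (simp add: power2_eq_square algebra_simps)
  ultimately show ?thesis by linarith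
next
  case False
  then show ?thesis
    using zero_le_power2[of tL] by linarith
qed

lemma lamLu_plus_lamLs: "lamLu tL dL + lamLs tL dL = tL"
  by (simp add: lamLu_def lamLs_def field_simps)

lemma lamLs_le_lamLu:
  assumes "4 * dL \<le> tL\<^sup>2"
  shows "lamLs tL dL \<le> lamLu tL dL"
  using assms by (simp add: lamLu_def lamLs_def)

lemma lamLu_times_lamLs:
  assumes "4 * dL \<le> tL\<^sup>2"
  shows "lamLu tL dL * lamLs tL dL = dL"
proof -
  have "lamLu tL dL * lamLs tL dL = (tL\<^sup>2 - (sqrt (tL\<^sup>2 - 4 * dL))\<^sup>2) / 4"
    by (simp add: lamLu_def lamLs_def power2_eq_square field_simps)
  also have "\<dots> = dL"
    using assms by simp
  finally show ?thesis .
qed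

lemma lamLs_lt_one_lt_lamLu:
  assumes "dL + 1 < tL"
  shows "lamLs tL dL < 1" and "1 < lamLu tL dL"
proof -
  have "(1 - lamLu tL dL) * (1 - lamLs tL dL) = 1 - tL + dL"
    using lamLu_plus_lamLs[of tL dL] lamLu_times_lamLs[of dL tL]
      discriminant_pos_if_trace_gt[OF assms]
    by (simp add: algebra_simps)
  with assms have "(1 - lamLu tL dL) * (1 - lamLs tL dL) < 0"
    by simp
  with lamLs_le_lamLu[of dL tL] discriminant_pos_if_trace_gt[OF assms]
  show "lamLs tL dL < 1" and "1 < lamLu tL dL"
    by (auto simp: mult_less_0_iff)
qed

lemma lamLs_pos:
  assumes "dL + 1 < tL" and "0 < dL"
  shows "0 < lamLs tL dL"
proof -
  have "lamLu tL dL * lamLs tL dL > 0"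
    using assms lamLu_times_lamLs[of dL tL] discriminant_pos_if_trace_gt[OF assms(1)] by simp
  moreover have "lamLu tL dL > 0"
    using lamLs_lt_one_lt_lamLu(2)[OF assms(1)] by simp
  ultimately show ?thesis
    by (simp add: zero_less_mult_iff)
qed

lemma phi_pos_imp_bound:
  fixes tL dL tR dR :: real
  defines "u \<equiv> lamLu tL dL"
  assumes "1 < u" and "tR < -(dR + 1)" and "0 < phi (tL, dL, tR, dR)"
  shows "dR * (u\<^sup>2 - 1) < u * (1 - dL)"
proof -
  have "phi (tL, dL, tR, dR) = (1 - u) * dR + tR * (u * (u - 1)) + u * (u - dL)"
    by (simp add: phi_def u_def algebra_simps)
  also have "\<dots> < (1 - u) * dR - (dR + 1) * (u * (u - 1)) + u * (u - dL)"
    using mult_strict_right_mono[OF assms(3), of "u * (u - 1)"] assms(2) by (simp add: algebra_simps)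
  also have "\<dots> = u * (1 - dL) - dR * (u\<^sup>2 - 1)"
    by (simp add: power2_eq_square algebra_simps)
  finally show ?thesis
    using assms(4) by simp
qed

lemma m_crit_gt:
  fixes tL dL tR dR :: real
  defines "u \<equiv> lamLu tL dL"
  assumes "dL + 1 < tL" and "0 < dL"
  shows "2 * u * (1 - dL) / (u\<^sup>2 - 1) < m_crit (tL, dL, tR, dR)"
proof -
  define s where "s = lamLs tL dL"
  have "1 < u\<^sup>2"
    using lamLs_lt_one_lt_lamLu(2)[OF assms(2)] by (simp add: u_def)
  have "tL = u + s"
    using lamLu_plus_lamLs[of tL dL] by (simp add: u_def s_def)
  moreover have "dL = u * s"
    using lamLu_times_lamLs[of dL tL] discriminant_pos_if_trace_gt[OF assms(2)]
    by (simp add: u_def s_def)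
  ultimately have "s * (u\<^sup>2 - 1) + 2 * tL - 2 * u * (1 - dL) = s * (3 * u\<^sup>2 + 1)"
    by (simp add: power2_eq_square algebra_simps)
  moreover have "0 < s * (3 * u\<^sup>2 + 1)"
    using lamLs_pos[OF assms(2,3)] by (simp add: s_def add_nonneg_pos)
  ultimately have "2 * u * (1 - dL) < s * (u\<^sup>2 - 1) + 2 * tL"
    by linarith
  with \<open>1 < u\<^sup>2\<close> have "2 * u * (1 - dL) / (u\<^sup>2 - 1) < (s * (u\<^sup>2 - 1) + 2 * tL) / (u\<^sup>2 - 1)"
    by (simp add: divide_strict_right_mono)
  also have "\<dots> = s + 2 * tL / (u\<^sup>2 - 1)"
    using \<open>1 < u\<^sup>2\<close> by (simp add: add_divide_distrib)
  finally have "2 * u * (1 - dL) / (u\<^sup>2 - 1) < s + 2 * tL / (u\<^sup>2 - 1)" .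
  then show ?thesis
    by (simp add: m_crit_def u_def s_def)
qed

theorem lemma4p3:
  fixes tL dL tR dR :: real
  assumes "(tL, dL, tR, dR) \<in> Phi_BYG"
  shows "m_crit (tL, dL, tR, dR) > 2 * dR"
proof -
  define u where "u = lamLu tL dL"
  from assms have trace: "dL + 1 < tL" and "0 < dL" and "tR < -(dR + 1)"
    and "0 < phi (tL, dL, tR, dR)"
    by (auto simp: Phi_BYG_def Phi_def)
  have "1 < u"
    using lamLs_lt_one_lt_lamLu(2)[OF trace] by (simp add: u_def)
  then have "0 < u\<^sup>2 - 1"
    by (simp add: power_less_one_iff one_less_power)
  have "dR * (u\<^sup>2 - 1) < u * (1 - dL)"
    using phi_pos_imp_bound \<open>1 < u\<close> \<open>tR < -(dR + 1)\<close> \<open>0 < phi (tL, dL, tR, dR)\<close>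
    by (simp add: u_def)
  with \<open>0 < u\<^sup>2 - 1\<close> have "2 * dR < 2 * u * (1 - dL) / (u\<^sup>2 - 1)"
    by (simp add: field_simps)
  also have "\<dots> < m_crit (tL, dL, tR, dR)"
    using m_crit_gt[OF trace \<open>0 < dL\<close>] by (simp add: u_def)
  finally show ?thesis .
qed

end
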